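(* For every admissible pair $(a,b)$, equality of morphisms in the canonical cube category $\mathbb{C}_{(a,b)}$ is decidable; that is, there is an algorithm which, given two terms (or tuples of terms) of $L_{(a,b)}$ in a common variable context, decides whether they are equal in $\mathbb{C}_{(a,b)}$.
   Context: Structural rules: $\mathsf{w}$ (weakening), $\mathsf{e}$ (exchange), $\mathsf{c}$ (contraction); admissible sets $a$: $\emptyset,\{\mathsf w\},\{\mathsf e\},\{\mathsf w,\mathsf e\},\{\mathsf e,\mathsf c\},\{\mathsf w,\mathsf e,\mathsf c\}$. Admissible signatures $b$: $(0,1)$, $(0,1,\vee)$, $(0,1,\wedge)$, $(0,1,\vee,\wedge)$, $(0,1,{}')$, $(0,1,\vee,\wedge,{}')$. Terms of $L_{(a,b)}$ in context $x_1,\dots,x_m$ are built from the variables and symbols of $b$; listing all variable occurrences (of a tuple of terms) left to right, every variable occurs unless $\mathsf w\in a$, they occur in order unless $\mathsf e\in a$, and none is duplicated unless $\mathsf c\in a$. The canonical cube category $\mathbb{C}_{(a,b)}$ has objects $[n]$, $n\ge0$; morphisms $[m]\to[n]$ are such $n$-tuples of terms in context $x_1,\dots,x_m$, identified when they define the same function $[0,1]^m\to[0,1]^n$ under $0,1$ = endpoints, $\vee=\max$, $\wedge=\min$, $x'=1-x$; composition is substitution. *)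

theory Defs
  imports Complex_Main "HOL-Library.Nat_Bijection"
begin

datatype srule = W | E | C

definition admissible_rules :: "srule set \<Rightarrow> bool" where
  "admissible_rules a \<longleftrightarrow> a \<in> {{}, {W}, {E}, {W,E}, {E,C}, {W,E,C}}"

text \<open>Operation symbols beyond the constants 0,1 (which are always present).\<close>
datatype sop = SJoin | SMeet | SNeg

definition admissible_sig :: "sop set \<Rightarrow> bool" where
  "admissible_sig b \<longleftrightarrow> b \<in> {{}, {SJoin}, {SMeet}, {SJoin,SMeet}, {SNeg}, {SJoin,SMeet,SNeg}}"

section \<open>Terms (variable x_(i+1) is represented by Var i)\<close>

datatype tm = Var nat | Zero | One | Join tm tm | Meet tm tm | Neg tm

fun in_sig :: "sop set \<Rightarrow> tm \<Rightarrow> bool" where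
  "in_sig b (Var i) = True"
| "in_sig b Zero = True"
| "in_sig b One = True"
| "in_sig b (Join s t) = (SJoin \<in> b \<and> in_sig b s \<and> in_sig b t)"
| "in_sig b (Meet s t) = (SMeet \<in> b \<and> in_sig b s \<and> in_sig b t)"
| "in_sig b (Neg t) = (SNeg \<in> b \<and> in_sig b t)"

fun occs :: "tm \<Rightarrow> nat list" where
  "occs (Var i) = [i]"
| "occs Zero = []"
| "occs One = []"
| "occs (Join s t) = occs s @ occs t"
| "occs (Meet s t) = occs s @ occs t"
| "occs (Neg t) = occs t"

definition wf_tuple :: "srule set \<Rightarrow> sop set \<Rightarrow> nat \<Rightarrow> tm list \<Rightarrow> bool" where
  "wf_tuple a b m ts \<longleftrightarrow>
     (\<forall>t\<in>set ts. in_sig b t) \<and>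
     (let vs = concat (map occs ts) in
        (\<forall>v\<in>set vs. v < m) \<and>
        (W \<notin> a \<longrightarrow> {..<m} \<subseteq> set vs) \<and>
        (E \<notin> a \<longrightarrow> sorted vs) \<and>
        (C \<notin> a \<longrightarrow> distinct vs))"

fun tm_eval :: "(nat \<Rightarrow> real) \<Rightarrow> tm \<Rightarrow> real" where
  "tm_eval x (Var i) = x i"
| "tm_eval x Zero = 0"
| "tm_eval x One = 1"
| "tm_eval x (Join s t) = max (tm_eval x s) (tm_eval x t)"
| "tm_eval x (Meet s t) = min (tm_eval x s) (tm_eval x t)"
| "tm_eval x (Neg t) = 1 - tm_eval x t"

text \<open>Equality of morphisms [m] -> [n] in the canonical cube category:
  same function [0,1]^m -> [0,1]^n.\<close>
definition same_morphism :: "nat \<Rightarrow> tm list \<Rightarrow> tm list \<Rightarrow> bool" where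
  "same_morphism m ts1 ts2 \<longleftrightarrow>
     length ts1 = length ts2 \<and>
     (\<forall>x::nat \<Rightarrow> real. (\<forall>i<m. 0 \<le> x i \<and> x i \<le> 1) \<longrightarrow>
        map (tm_eval x) ts1 = map (tm_eval x) ts2)"

datatype recf = Zf | Sf | Proj nat | Comp recf "recf list" | Prec recf recf | Mn recf

inductive recf_eval :: "recf \<Rightarrow> nat list \<Rightarrow> nat \<Rightarrow> bool" where
  zero: "recf_eval Zf xs 0"
| succ: "recf_eval Sf (x # xs) (Suc x)"
| proj: "i < length xs \<Longrightarrow> recf_eval (Proj i) xs (xs ! i)"
| comp: "length ys = length gs \<Longrightarrow> (\<forall>i<length gs. recf_eval (gs ! i) xs (ys ! i)) \<Longrightarrow>
         recf_eval f ys y \<Longrightarrow> recf_eval (Comp f gs) xs y"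
| prec0: "recf_eval f xs y \<Longrightarrow> recf_eval (Prec f g) (0 # xs) y"
| precS: "recf_eval (Prec f g) (n # xs) r \<Longrightarrow> recf_eval g (n # r # xs) y \<Longrightarrow>
          recf_eval (Prec f g) (Suc n # xs) y"
| mn: "recf_eval f (y # xs) 0 \<Longrightarrow> (\<forall>z<y. \<exists>v. recf_eval f (z # xs) (Suc v)) \<Longrightarrow>
       recf_eval (Mn f) xs y"

fun tm_code :: "tm \<Rightarrow> nat" where
  "tm_code (Var i) = prod_encode (0, i)"
| "tm_code Zero = prod_encode (1, 0)"
| "tm_code One = prod_encode (2, 0)"
| "tm_code (Join s t) = prod_encode (3, prod_encode (tm_code s, tm_code t))"
| "tm_code (Meet s t) = prod_encode (4, prod_encode (tm_code s, tm_code t))"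
| "tm_code (Neg t) = prod_encode (5, tm_code t)"

definition input_code :: "nat \<Rightarrow> tm list \<Rightarrow> tm list \<Rightarrow> nat" where
  "input_code m ts1 ts2 =
     prod_encode (m, prod_encode (list_encode (map tm_code ts1), list_encode (map tm_code ts2)))"

end

theory Submission
  imports Defs
begin

text \<open>
  Two tuples of terms in \<open>m\<close> variables define the same function on \<open>[0,1]\<^sup>m\<close> iff they
  agree on the grid \<open>{0, 1/N, \<dots>, 1}\<^sup>m\<close> with \<open>N = (4m+2)!\<close>. Given \<open>x \<in> [0,1]\<^sup>m\<close>,
  the finite set \<open>S\<close> of the values \<open>0, 1, x\<^sub>i, 1 - x\<^sub>i\<close> is closed under \<open>s \<mapsto> 1 - s\<close>,
  and sending the \<open>k\<close>-th smallest element of \<open>S\<close> to \<open>k / (|S| - 1)\<close> is an order embedding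
  into the grid that fixes 0 and 1 and commutes with \<open>s \<mapsto> 1 - s\<close>, hence with max, min and
  every term. So two terms agree at \<open>x\<close> iff they agree at the image of \<open>x\<close>, and agreement on
  the grid is a bounded search, carried out by a primitive recursive program that evaluates
  terms from their codes by course-of-values recursion.
\<close>

section \<open>Computable functions\<close>

definition computable :: "nat \<Rightarrow> (nat list \<Rightarrow> nat) \<Rightarrow> bool" where
  "computable n f \<longleftrightarrow> (\<exists>F. \<forall>xs. length xs = n \<longrightarrow> recf_eval F xs (f xs))"

definition decidable :: "nat \<Rightarrow> (nat list \<Rightarrow> bool) \<Rightarrow> bool" where
  "decidable n P \<longleftrightarrow> computable n (\<lambda>xs. if P xs then 1 else 0)"

lemma computable_cong:
  "computable n f \<Longrightarrow> (\<And>xs. length xs = n \<Longrightarrow> f xs = g xs) \<Longrightarrow> computable n g"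
  unfolding computable_def by metis

lemma computable_Suc:
  assumes "computable n e"
  shows "computable n (\<lambda>xs. Suc (e xs))"
proof -
  obtain F where F: "\<forall>xs. length xs = n \<longrightarrow> recf_eval F xs (e xs)"
    using assms unfolding computable_def by blast
  have "recf_eval (Comp Sf [F]) xs (Suc (e xs))" if "length xs = n" for xs
    by (rule recf_eval.comp[where ys = "[e xs]"])
      (use F that in \<open>auto intro: recf_eval.succ[where xs = "[]", simplified]\<close>)
  then show ?thesis unfolding computable_def by blast
qed

lemma computable_const: "computable n (\<lambda>_. c)"
proof (induction c)
  case 0
  show ?case unfolding computable_def by (metis recf_eval.zero)
next
  case (Suc c)
  then show ?case by (rule computable_Suc)
qed

lemma computable_proj: "i < n \<Longrightarrow> computable n (\<lambda>xs. xs ! i)"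
  unfolding computable_def by (metis recf_eval.proj)

lemma computable_proj_tl: "Suc i < n \<Longrightarrow> computable n (\<lambda>xs. tl xs ! i)"
  by (rule computable_cong[OF computable_proj[of "Suc i"]]) (auto simp: nth_tl)

lemma computable_proj_tl_tl: "Suc (Suc i) < n \<Longrightarrow> computable n (\<lambda>xs. tl (tl xs) ! i)"
  by (rule computable_cong[OF computable_proj[of "Suc (Suc i)"]]) (auto simp: nth_tl)

lemma computable_compose:
  assumes h: "computable k h" and len: "length gs = k" and gs: "\<forall>g\<in>set gs. computable n g"
  shows "computable n (\<lambda>xs. h (map (\<lambda>g. g xs) gs))"
proof -
  obtain H where H: "\<forall>ys. length ys = k \<longrightarrow> recf_eval H ys (h ys)"
    using h unfolding computable_def by blast
  obtain F where F: "\<forall>g\<in>set gs. \<forall>xs. length xs = n \<longrightarrow> recf_eval (F g) xs (g xs)"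
    using bchoice[OF gs[unfolded computable_def]] by blast
  have "recf_eval (Comp H (map F gs)) xs (h (map (\<lambda>g. g xs) gs))" if "length xs = n" for xs
    by (rule recf_eval.comp[where ys = "map (\<lambda>g. g xs) gs"]) (use F H len that in auto)
  then show ?thesis unfolding computable_def by blast
qed

lemma computable_compose1:
  "computable 1 (\<lambda>ys. h (ys ! 0)) \<Longrightarrow> computable n e \<Longrightarrow> computable n (\<lambda>xs. h (e xs))"
  using computable_compose[of 1 "\<lambda>ys. h (ys ! 0)" "[e]" n] by simp

lemma computable_compose2:
  "computable 2 (\<lambda>ys. h (ys ! 0) (ys ! 1)) \<Longrightarrow> computable n e1 \<Longrightarrow> computable n e2 \<Longrightarrow>
   computable n (\<lambda>xs. h (e1 xs) (e2 xs))"
  using computable_compose[of 2 "\<lambda>ys. h (ys ! 0) (ys ! 1)" "[e1, e2]" n] by simp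

lemma computable_compose3:
  "computable 3 (\<lambda>ys. h (ys ! 0) (ys ! 1) (ys ! 2)) \<Longrightarrow>
   computable n e1 \<Longrightarrow> computable n e2 \<Longrightarrow> computable n e3 \<Longrightarrow>
   computable n (\<lambda>xs. h (e1 xs) (e2 xs) (e3 xs))"
  using computable_compose[of 3 "\<lambda>ys. h (ys ! 0) (ys ! 1) (ys ! 2)" "[e1, e2, e3]" n]
  by (simp add: numeral_3_eq_3)

lemma computable_compose4:
  "computable 4 (\<lambda>ys. h (ys ! 0) (ys ! 1) (ys ! 2) (ys ! 3)) \<Longrightarrow>
   computable n e1 \<Longrightarrow> computable n e2 \<Longrightarrow> computable n e3 \<Longrightarrow> computable n e4 \<Longrightarrow>
   computable n (\<lambda>xs. h (e1 xs) (e2 xs) (e3 xs) (e4 xs))"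
  using computable_compose[of 4 "\<lambda>ys. h (ys ! 0) (ys ! 1) (ys ! 2) (ys ! 3)" "[e1, e2, e3, e4]" n]
  by (simp add: eval_nat_numeral)

text \<open>The arities are passed as equations so that the lemma applies to numerals.\<close>
lemma computable_prec:
  assumes f: "computable n f" and g: "computable n2 g"
    and arity: "n2 = Suc (Suc n)" "n1 = Suc n"
    and H0: "\<And>xs. length xs = n \<Longrightarrow> H 0 xs = f xs"
    and HS: "\<And>k xs. length xs = n \<Longrightarrow> H (Suc k) xs = g (k # H k xs # xs)"
  shows "computable n1 (\<lambda>xs. H (xs ! 0) (tl xs))"
proof -
  obtain F where F: "\<forall>xs. length xs = n \<longrightarrow> recf_eval F xs (f xs)"
    using f unfolding computable_def by blast
  obtain G where G: "\<forall>ys. length ys = Suc (Suc n) \<longrightarrow> recf_eval G ys (g ys)"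
    using g arity unfolding computable_def by blast
  have P: "recf_eval (Prec F G) (k # xs) (H k xs)" if "length xs = n" for k xs
  proof (induction k)
    case 0
    show ?case using F H0 that by (auto intro: recf_eval.prec0)
  next
    case (Suc k)
    show ?case using Suc G HS that by (auto intro: recf_eval.precS)
  qed
  have "recf_eval (Prec F G) xs (H (xs ! 0) (tl xs))" if "length xs = Suc n" for xs
    using P[of "tl xs" "xs ! 0"] that by (cases xs) auto
  then show ?thesis using arity unfolding computable_def by blast
qed

lemma computable_pred:
  assumes "computable n e"
  shows "computable n (\<lambda>xs. e xs - 1)"
proof -
  have "computable 1 (\<lambda>xs. (\<lambda>k _. k - 1) (xs ! 0) (tl xs))"
    by (rule computable_prec[OF computable_const[of _ 0] computable_proj[of 0 2]]) auto
  then show ?thesis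
    by (rule computable_compose1[OF _ assms])
qed

lemma computable_diff:
  assumes "computable n e1" "computable n e2"
  shows "computable n (\<lambda>xs. e1 xs - e2 xs)"
proof -
  have "computable 2 (\<lambda>xs. (\<lambda>k ys. ys ! 0 - k) (xs ! 0) (tl xs))"
    by (rule computable_prec[OF computable_proj[of 0 1] computable_pred[OF computable_proj[of 1 3]]])
      (auto simp: diff_Suc split: nat.split)
  then have "computable 2 (\<lambda>ys. ys ! 1 - ys ! 0)"
    by (rule computable_cong) (auto simp: nth_tl)
  then show ?thesis
    by (rule computable_compose2[of "\<lambda>a b. b - a", OF _ assms(2,1)])
qed

lemma computable_add:
  assumes "computable n e1" "computable n e2"
  shows "computable n (\<lambda>xs. e1 xs + e2 xs)"
proof -
  have "computable 2 (\<lambda>xs. (\<lambda>k ys. ys ! 0 + k) (xs ! 0) (tl xs))"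
    by (rule computable_prec[OF computable_proj[of 0 1] computable_Suc[OF computable_proj[of 1 3]]])
      auto
  then have "computable 2 (\<lambda>ys. ys ! 1 + ys ! 0)"
    by (rule computable_cong) (auto simp: nth_tl)
  then show ?thesis
    by (rule computable_compose2[of "\<lambda>a b. b + a", OF _ assms(2,1)])
qed

lemma computable_mult:
  assumes "computable n e1" "computable n e2"
  shows "computable n (\<lambda>xs. e1 xs * e2 xs)"
proof -
  have "computable 2 (\<lambda>xs. (\<lambda>k ys. ys ! 0 * k) (xs ! 0) (tl xs))"
    by (rule computable_prec[OF computable_const[of _ 0] computable_add[OF computable_proj[of 1 3] computable_proj[of 2 3]]])
      (auto simp: numeral_3_eq_3)
  then have "computable 2 (\<lambda>ys. ys ! 1 * ys ! 0)"
    by (rule computable_cong) (auto simp: nth_tl)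
  then show ?thesis
    by (rule computable_compose2[of "\<lambda>a b. b * a", OF _ assms(2,1)])
qed

lemma computable_compose_cons:
  assumes h: "computable (Suc n) h" and b: "computable n b"
  shows "computable n (\<lambda>xs. h (b xs # xs))"
proof -
  have comp: "computable n (\<lambda>xs. h (map (\<lambda>g. g xs) (b # map (\<lambda>i xs. xs ! i) [0..<n])))"
    by (rule computable_compose[OF h]) (auto intro: b computable_proj)
  have "map (\<lambda>i. xs ! i) [0..<n] = xs" if "length xs = n" for xs :: "nat list"
    using map_nth[of xs] that by simp
  then show ?thesis
    by (intro computable_cong[OF comp]) (simp add: comp_def)
qed

lemma computable_drop_second:
  assumes h: "computable (Suc n) h"
  shows "computable (Suc (Suc n)) (\<lambda>ys. h (ys ! 0 # tl (tl ys)))"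
proof -
  have comp: "computable (Suc (Suc n))
      (\<lambda>ys. h (map (\<lambda>g. g ys) ((\<lambda>ys. ys ! 0) # map (\<lambda>i ys. ys ! Suc (Suc i)) [0..<n])))"
    by (rule computable_compose[OF h]) (auto intro: computable_proj)
  have tl_tl: "map (\<lambda>i. ys ! Suc (Suc i)) [0..<n] = tl (tl ys)" if "length ys = Suc (Suc n)" for ys
    using that by (intro nth_equalityI) (auto simp: nth_tl)
  show ?thesis
    by (rule computable_cong[OF comp]) (simp add: comp_def tl_tl)
qed

lemma decidable_le:
  assumes "computable n e1" "computable n e2"
  shows "decidable n (\<lambda>xs. e1 xs \<le> e2 xs)"
  unfolding decidable_def
  by (rule computable_cong[OF computable_diff[OF computable_const[of _ 1] computable_diff[OF assms]]]) auto

lemma decidable_conj: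
  assumes "decidable n P" "decidable n Q"
  shows "decidable n (\<lambda>xs. P xs \<and> Q xs)"
  using computable_mult[OF assms[unfolded decidable_def]] unfolding decidable_def
  by (rule computable_cong) auto

lemma decidable_eq:
  assumes "computable n e1" "computable n e2"
  shows "decidable n (\<lambda>xs. e1 xs = e2 xs)"
  using decidable_conj[OF decidable_le[OF assms] decidable_le[OF assms(2,1)]]
  unfolding decidable_def by (rule computable_cong) auto

lemma computable_if:
  assumes P: "decidable n P" and "computable n a" "computable n b"
  shows "computable n (\<lambda>xs. if P xs then a xs else b xs)"
proof -
  note p = P[unfolded decidable_def]
  show ?thesis
    by (rule computable_cong[OF computable_add[OF computable_mult[OF p assms(2)]
          computable_mult[OF computable_diff[OF computable_const[of _ 1] p] assms(3)]]]) auto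
qed

lemma computable_max: "computable n e1 \<Longrightarrow> computable n e2 \<Longrightarrow> computable n (\<lambda>xs. max (e1 xs) (e2 xs))"
  unfolding max_def by (intro computable_if decidable_le)

lemma computable_min: "computable n e1 \<Longrightarrow> computable n e2 \<Longrightarrow> computable n (\<lambda>xs. min (e1 xs) (e2 xs))"
  unfolding min_def by (intro computable_if decidable_le)

lemma decidable_all_less:
  assumes b: "computable n b" and P: "decidable (Suc n) (\<lambda>ys. P (ys ! 0) (tl ys))"
  shows "decidable n (\<lambda>xs. \<forall>j<b xs. P j xs)"
proof -
  define Q where "Q k xs = (if \<forall>j<k. P j xs then 1 else 0 :: nat)" for k xs
  have "computable (Suc (Suc n)) (\<lambda>ys. (if P (ys ! 0) (tl (tl ys)) then 1 else 0))"
    using computable_drop_second[OF P[unfolded decidable_def]] by simp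
  then have step: "computable (Suc (Suc n)) (\<lambda>ys. ys ! 1 * (if P (ys ! 0) (tl (tl ys)) then 1 else 0))"
    by (rule computable_mult[OF computable_proj, rotated]) simp
  have "computable (Suc n) (\<lambda>ys. Q (ys ! 0) (tl ys))"
  proof (rule computable_prec[OF computable_const[of _ 1] step])
    show "Q (Suc k) xs = (k # Q k xs # xs) ! 1 * (if P ((k # Q k xs # xs) ! 0) (tl (tl (k # Q k xs # xs))) then 1 else 0)" for k xs
      by (simp add: Q_def All_less_Suc)
  qed (simp_all add: Q_def)
  from computable_compose_cons[OF this b] show ?thesis
    unfolding decidable_def Q_def by (simp only: nth_Cons_0 list.sel(3))
qed

lemma computable_triangle:
  assumes "computable n e"
  shows "computable n (\<lambda>xs. triangle (e xs))"
proof -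
  have "computable 1 (\<lambda>xs. (\<lambda>k _. triangle k) (xs ! 0) (tl xs))"
    by (rule computable_prec[OF computable_const[of _ 0]
          computable_add[OF computable_proj[of 1 2] computable_Suc[OF computable_proj[of 0 2]]]])
      auto
  then show ?thesis
    by (rule computable_compose1[OF _ assms])
qed

lemma computable_fact:
  assumes "computable n e"
  shows "computable n (\<lambda>xs. fact (e xs))"
proof -
  have "computable 1 (\<lambda>xs. (\<lambda>k _. fact k) (xs ! 0) (tl xs))"
    by (rule computable_prec[OF computable_const[of _ 1]
          computable_mult[OF computable_Suc[OF computable_proj[of 0 2]] computable_proj[of 1 2]]])
      auto
  then show ?thesis
    by (rule computable_compose1[OF _ assms])
qed

section \<open>Cantor pairing and coded lists\<close>

lemma computable_prod_encode:
  "computable n e1 \<Longrightarrow> computable n e2 \<Longrightarrow> computable n (\<lambda>xs. prod_encode (e1 xs, e2 xs))"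
  unfolding prod_encode_def by (auto intro!: computable_add computable_triangle)

fun tri_root :: "nat \<Rightarrow> nat \<Rightarrow> nat" where
  "tri_root 0 n = 0"
| "tri_root (Suc k) n = (if triangle (Suc (tri_root k n)) \<le> n then Suc (tri_root k n) else tri_root k n)"

lemma computable_tri_root:
  assumes "computable n e1" "computable n e2"
  shows "computable n (\<lambda>xs. tri_root (e1 xs) (e2 xs))"
proof -
  have "computable 3 (\<lambda>ys. if triangle (Suc (ys ! 1)) \<le> ys ! 2 then Suc (ys ! 1) else ys ! 1)"
    by (intro computable_if decidable_le computable_triangle computable_Suc computable_proj) auto
  then have "computable 2 (\<lambda>xs. (\<lambda>k ys. tri_root k (ys ! 0)) (xs ! 0) (tl xs))"
    by (rule computable_prec[OF computable_const[of 1 0]]) (auto simp: numeral_eq_Suc)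
  then have "computable 2 (\<lambda>ys. tri_root (ys ! 0) (ys ! 1))"
    by (rule computable_cong) (auto simp: nth_tl)
  then show ?thesis
    using assms by (rule computable_compose2)
qed

lemma triangle_mono: "i \<le> j \<Longrightarrow> triangle i \<le> triangle j"
  by (induction j) (auto simp: le_Suc_eq)

lemma le_triangle: "s \<le> triangle s"
  by (induction s) auto

lemma less_prod_encode: "0 < a \<Longrightarrow> b < prod_encode (a, b)"
  using le_triangle[of "a + b"] by (simp add: prod_encode_def)

lemma tri_root_eq:
  assumes "n = triangle s + a" "a \<le> s"
  shows "tri_root k n = min k s"
proof (induction k)
  case (Suc k)
  show ?case
  proof (cases "k < s")
    case True
    then have "triangle (Suc k) \<le> n" using triangle_mono[of "Suc k" s] assms by auto
    then show ?thesis using Suc True by auto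
  next
    case False
    then have "\<not> triangle (Suc s) \<le> n" using assms by simp
    then show ?thesis using Suc False by auto
  qed
qed simp

lemma prod_decode_tri_root:
  "prod_decode n = (n - triangle (tri_root n n), tri_root n n - (n - triangle (tri_root n n)))"
proof -
  obtain a b where ab: "prod_decode n = (a, b)" by (cases "prod_decode n")
  have n: "n = triangle (a + b) + a"
    using prod_decode_inverse[of n] ab by (simp add: prod_encode_def)
  have "a + b \<le> n" using n le_triangle[of "a + b"] by simp
  then have "tri_root n n = a + b" using tri_root_eq[OF n, of n] by simp
  then show ?thesis using ab n by simp
qed

lemma computable_fst_prod_decode: "computable n e \<Longrightarrow> computable n (\<lambda>xs. fst (prod_decode (e xs)))"
  unfolding prod_decode_tri_root by (auto intro!: computable_diff computable_triangle computable_tri_root)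

lemma computable_snd_prod_decode: "computable n e \<Longrightarrow> computable n (\<lambda>xs. snd (prod_decode (e xs)))"
  unfolding prod_decode_tri_root by (auto intro!: computable_diff computable_triangle computable_tri_root)

definition hd_code :: "nat \<Rightarrow> nat" where "hd_code L = fst (prod_decode (L - 1))"
definition tl_code :: "nat \<Rightarrow> nat" where "tl_code L = snd (prod_decode (L - 1))"
definition nth_code :: "nat \<Rightarrow> nat \<Rightarrow> nat" where "nth_code L j = hd_code ((tl_code ^^ j) L)"

lemma prod_decode_0: "prod_decode 0 = (0, 0)"
  using prod_encode_inverse[of "(0, 0)"] by (simp add: prod_encode_def)

lemma hd_code_list_encode: "hd_code (list_encode xs) = (if xs = [] then 0 else hd xs)"
  by (cases xs) (simp_all add: hd_code_def prod_decode_0)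

lemma tl_code_list_encode: "tl_code (list_encode xs) = list_encode (tl xs)"
  by (cases xs) (simp_all add: tl_code_def prod_decode_0)

lemma funpow_tl_code_list_encode: "(tl_code ^^ j) (list_encode xs) = list_encode (drop j xs)"
  by (induction j) (simp_all add: tl_code_list_encode drop_Suc tl_drop)

lemma nth_code_list_encode: "nth_code (list_encode xs) j = (if j < length xs then xs ! j else 0)"
  by (simp add: nth_code_def funpow_tl_code_list_encode hd_code_list_encode hd_drop_conv_nth)

lemma length_le_list_encode: "length xs \<le> list_encode xs"
  by (induction xs) (auto intro: order.trans[OF _ le_prod_encode_2])

lemma prod_encode_mono: "a \<le> c \<Longrightarrow> b \<le> d \<Longrightarrow> prod_encode (a, b) \<le> prod_encode (c, d)"
  unfolding prod_encode_def using triangle_mono[of "a + b" "c + d"] by simp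

lemma list_encode_mono:
  "list_all2 (\<le>) xs ys \<Longrightarrow> list_encode xs \<le> list_encode ys"
  by (induction xs ys rule: list_all2_induct) (auto intro: prod_encode_mono)

lemma computable_nth_code:
  assumes "computable n e1" "computable n e2"
  shows "computable n (\<lambda>xs. nth_code (e1 xs) (e2 xs))"
proof -
  have step: "computable 3 (\<lambda>ys. tl_code (ys ! 1))"
    unfolding tl_code_def by (intro computable_snd_prod_decode computable_pred computable_proj) simp
  have "computable 2 (\<lambda>xs. (\<lambda>k ys. (tl_code ^^ k) (ys ! 0)) (xs ! 0) (tl xs))"
    by (rule computable_prec[OF computable_proj[of 0 1] step]) auto
  then have "computable 2 (\<lambda>ys. (tl_code ^^ ys ! 0) (ys ! 1))"
    by (rule computable_cong) (auto simp: nth_tl)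
  then have "computable 2 (\<lambda>ys. (tl_code ^^ ys ! 1) (ys ! 0))"
    by (rule computable_compose2) (auto intro: computable_proj)
  then have "computable 2 (\<lambda>ys. nth_code (ys ! 0) (ys ! 1))"
    unfolding nth_code_def hd_code_def by (intro computable_fst_prod_decode computable_pred)
  then show ?thesis
    using assms by (rule computable_compose2)
qed

lemma computable_list_encode_replicate:
  assumes "computable n e1" "computable n e2"
  shows "computable n (\<lambda>xs. list_encode (replicate (e1 xs) (e2 xs)))"
proof -
  have "computable 3 (\<lambda>ys. Suc (prod_encode (ys ! 2, ys ! 1)))"
    by (intro computable_Suc computable_prod_encode computable_proj) auto
  then have "computable 2 (\<lambda>xs. (\<lambda>k ys. list_encode (replicate k (ys ! 0))) (xs ! 0) (tl xs))"
    by (rule computable_prec[OF computable_const[of 1 0]]) (auto simp: numeral_eq_Suc)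
  then have "computable 2 (\<lambda>ys. list_encode (replicate (ys ! 0) (ys ! 1)))"
    by (rule computable_cong) (auto simp: nth_tl)
  then show ?thesis
    using assms by (rule computable_compose2)
qed

section \<open>Evaluating coded terms\<close>

fun tm_eval_scaled :: "nat \<Rightarrow> (nat \<Rightarrow> nat) \<Rightarrow> tm \<Rightarrow> nat" where
  "tm_eval_scaled N y (Var i) = y i"
| "tm_eval_scaled N y Zero = 0"
| "tm_eval_scaled N y One = N"
| "tm_eval_scaled N y (Join s t) = max (tm_eval_scaled N y s) (tm_eval_scaled N y t)"
| "tm_eval_scaled N y (Meet s t) = min (tm_eval_scaled N y s) (tm_eval_scaled N y t)"
| "tm_eval_scaled N y (Neg t) = N - tm_eval_scaled N y t"

definition grid_point :: "nat \<Rightarrow> nat \<Rightarrow> nat \<Rightarrow> nat" where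
  "grid_point N g i = min N (nth_code g i)"

text \<open>\<open>T\<close> codes the list of values of the codes \<open>n - 1, \<dots>, 0\<close>, so the value of a code
  \<open>i < n\<close> sits at position \<open>n - Suc i\<close>; subterms have smaller codes than the term.\<close>
definition eval_step :: "nat \<Rightarrow> nat \<Rightarrow> nat \<Rightarrow> nat \<Rightarrow> nat" where
  "eval_step N g T n =
    (let k = fst (prod_decode n); a = snd (prod_decode n); val = (\<lambda>i. nth_code T (n - Suc i)) in
     if k = 0 then grid_point N g a
     else if k = 1 then 0
     else if k = 2 then N
     else if k = 3 then max (val (fst (prod_decode a))) (val (snd (prod_decode a)))
     else if k = 4 then min (val (fst (prod_decode a))) (val (snd (prod_decode a)))
     else if k = 5 then N - val a
     else 0)"

fun eval_table :: "nat \<Rightarrow> nat \<Rightarrow> nat \<Rightarrow> nat" where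
  "eval_table N g 0 = 0"
| "eval_table N g (Suc n) = Suc (prod_encode (eval_step N g (eval_table N g n) n, eval_table N g n))"

definition eval_code :: "nat \<Rightarrow> nat \<Rightarrow> nat \<Rightarrow> nat" where
  "eval_code N g n = eval_step N g (eval_table N g n) n"

lemma eval_table_eq: "eval_table N g n = list_encode (map (eval_code N g) (rev [0..<n]))"
  by (induction n) (simp_all add: eval_code_def)

lemma nth_code_eval_table: "i < n \<Longrightarrow> nth_code (eval_table N g n) (n - Suc i) = eval_code N g i"
  by (simp add: eval_table_eq nth_code_list_encode rev_nth)

lemma tm_code_subterms:
  "tm_code s < tm_code (Join s t)" "tm_code t < tm_code (Join s t)"
  "tm_code s < tm_code (Meet s t)" "tm_code t < tm_code (Meet s t)"
  "tm_code t < tm_code (Neg t)"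
  by (auto intro!: le_less_trans[OF _ less_prod_encode] le_prod_encode_1 le_prod_encode_2)

lemma eval_code_tm_code: "eval_code N g (tm_code t) = tm_eval_scaled N (grid_point N g) t"
proof (induction t)
  case (Join s t)
  then show ?case using tm_code_subterms
    by (subst eval_code_def) (simp add: eval_step_def nth_code_eval_table)
next
  case (Meet s t)
  then show ?case using tm_code_subterms
    by (subst eval_code_def) (simp add: eval_step_def nth_code_eval_table)
next
  case (Neg t)
  then show ?case using tm_code_subterms
    by (subst eval_code_def) (simp add: eval_step_def nth_code_eval_table)
qed (simp_all add: eval_code_def eval_step_def)

lemma computable_eval_step:
  assumes "computable n e1" "computable n e2" "computable n e3" "computable n e4"
  shows "computable n (\<lambda>xs. eval_step (e1 xs) (e2 xs) (e3 xs) (e4 xs))"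
proof -
  have "computable 4 (\<lambda>ys. eval_step (ys ! 0) (ys ! 1) (ys ! 2) (ys ! 3))"
    unfolding eval_step_def Let_def grid_point_def
    by (intro computable_if decidable_eq computable_max computable_min computable_diff computable_nth_code
        computable_fst_prod_decode computable_snd_prod_decode computable_Suc computable_proj computable_const)
      auto
  then show ?thesis
    using assms by (rule computable_compose4)
qed

lemma computable_eval_table:
  assumes "computable n e1" "computable n e2" "computable n e3"
  shows "computable n (\<lambda>xs. eval_table (e1 xs) (e2 xs) (e3 xs))"
proof -
  have "computable 4 (\<lambda>ys. Suc (prod_encode (eval_step (ys ! 2) (ys ! 3) (ys ! 1) (ys ! 0), ys ! 1)))"
    by (intro computable_Suc computable_prod_encode computable_eval_step computable_proj) auto
  then have "computable 3 (\<lambda>xs. (\<lambda>k ys. eval_table (ys ! 0) (ys ! 1) k) (xs ! 0) (tl xs))"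
    by (rule computable_prec[OF computable_const[of 2 0]]) (auto simp: numeral_eq_Suc)
  then have "computable 3 (\<lambda>ys. eval_table (ys ! 1) (ys ! 2) (ys ! 0))"
    by (rule computable_cong) (auto simp: nth_tl numeral_eq_Suc)
  then have "computable 3 (\<lambda>ys. eval_table (ys ! 0) (ys ! 1) (ys ! 2))"
    using computable_compose3[of "\<lambda>c a b. eval_table a b c", OF _
        computable_proj[of 2 3] computable_proj[of 0 3] computable_proj[of 1 3]]
    by simp
  then show ?thesis
    using assms by (rule computable_compose3)
qed

lemma computable_eval_code:
  "computable n e1 \<Longrightarrow> computable n e2 \<Longrightarrow> computable n e3 \<Longrightarrow>
   computable n (\<lambda>xs. eval_code (e1 xs) (e2 xs) (e3 xs))"
  unfolding eval_code_def by (intro computable_eval_step computable_eval_table)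

lemma tm_eval_cong: "(\<And>v. v \<in> set (occs t) \<Longrightarrow> x v = y v) \<Longrightarrow> tm_eval x t = tm_eval y t"
  by (induction t) auto

lemma tm_eval_scaled_cong:
  "(\<And>v. v \<in> set (occs t) \<Longrightarrow> x v = y v) \<Longrightarrow> tm_eval_scaled N x t = tm_eval_scaled N y t"
  by (induction t) auto

lemma tm_eval_scaled_le: "(\<And>i. y i \<le> N) \<Longrightarrow> tm_eval_scaled N y t \<le> N"
  by (induction t) auto

lemma tm_eval_divide:
  assumes "0 < N" "\<And>i. y i \<le> N"
  shows "tm_eval (\<lambda>i. real (y i) / real N) t = real (tm_eval_scaled N y t) / real N"
proof (induction t)
  case (Join s t)
  then show ?case by (simp only: tm_eval.simps tm_eval_scaled.simps of_nat_max max_divide_distrib_right) simp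
next
  case (Meet s t)
  then show ?case by (simp only: tm_eval.simps tm_eval_scaled.simps of_nat_min min_divide_distrib_right) simp
next
  case (Neg t)
  then show ?case using tm_eval_scaled_le[of y N t, OF assms(2)] assms(1) by (simp add: of_nat_diff field_simps)
qed (use assms in simp_all)

section \<open>Rank maps\<close>

definition signed_rank :: "real set \<Rightarrow> real \<Rightarrow> int" where
  "signed_rank S s = int (card {u \<in> S. u < s}) - int (card {u \<in> S. s < u})"

text \<open>For \<open>s \<in> S\<close>, \<open>signed_rank S s + (card S - 1)\<close> is twice the rank of \<open>s\<close> in \<open>S\<close>;
  the signed form makes the symmetry under \<open>s \<mapsto> 1 - s\<close> evident.\<close>
definition rank_map :: "real set \<Rightarrow> real \<Rightarrow> real" where
  "rank_map S s = (signed_rank S s + int (card S - 1)) / (2 * real (card S - 1))"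

lemma signed_rank_strict_mono:
  assumes "finite S" "s \<in> S" "s' \<in> S" "s < s'"
  shows "signed_rank S s < signed_rank S s'"
proof -
  have "card {u \<in> S. u < s} < card {u \<in> S. u < s'}"
    using assms by (intro psubset_card_mono) auto
  moreover have "card {u \<in> S. s' < u} \<le> card {u \<in> S. s < u}"
    using assms by (intro card_mono) auto
  ultimately show ?thesis by (simp add: signed_rank_def)
qed

locale unit_symmetric_set =
  fixes S :: "real set"
  assumes finite_S: "finite S" and S_unit: "S \<subseteq> {0..1}" and zero_in_S: "0 \<in> S" and one_in_S: "1 \<in> S"
    and reflect_in_S: "s \<in> S \<Longrightarrow> 1 - s \<in> S"
begin

lemma card_ge_2: "2 \<le> card S"
proof -
  have "{0, 1} \<subseteq> S" using zero_in_S one_in_S by auto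
  from card_mono[OF finite_S this] show ?thesis by simp
qed

lemma card_above_reflect: "card {u \<in> S. u < 1 - s} = card {u \<in> S. s < u}"
proof -
  have "{u \<in> S. u < 1 - s} = (\<lambda>u. 1 - u) ` {u \<in> S. s < u}"
  proof (intro equalityI subsetI)
    fix u assume "u \<in> {u \<in> S. u < 1 - s}"
    then have "1 - u \<in> {u \<in> S. s < u}" using reflect_in_S by auto
    then show "u \<in> (\<lambda>u. 1 - u) ` {u \<in> S. s < u}" by (rule rev_image_eqI) simp
  qed (auto simp: reflect_in_S)
  then show ?thesis by (simp add: card_image inj_on_def)
qed

lemma signed_rank_reflect: "signed_rank S (1 - s) = - signed_rank S s"
  using card_above_reflect[of s] card_above_reflect[of "1 - s"] by (simp add: signed_rank_def)

lemma signed_rank_zero: "signed_rank S 0 = - int (card S - 1)"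
proof -
  have "{u \<in> S. u < 0} = {}" "{u \<in> S. 0 < u} = S - {0}" using S_unit by force+
  then show ?thesis using zero_in_S card_ge_2 by (simp add: signed_rank_def finite_S of_nat_diff)
qed

lemma signed_rank_one: "signed_rank S 1 = int (card S - 1)"
  using signed_rank_reflect[of 0] by (simp add: signed_rank_zero)

lemma rank_map_zero: "rank_map S 0 = 0"
  by (simp add: rank_map_def signed_rank_zero)

lemma rank_map_one: "rank_map S 1 = 1"
  using card_ge_2 by (simp add: rank_map_def signed_rank_one)

lemma rank_map_reflect: "rank_map S (1 - s) = 1 - rank_map S s"
  using card_ge_2 by (simp add: rank_map_def signed_rank_reflect field_simps)

lemma signed_rank_le_iff: "s \<in> S \<Longrightarrow> s' \<in> S \<Longrightarrow> signed_rank S s \<le> signed_rank S s' \<longleftrightarrow> s \<le> s'"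
  using signed_rank_strict_mono[OF finite_S, of s s'] signed_rank_strict_mono[OF finite_S, of s' s]
  by (cases s s' rule: linorder_cases) auto

lemma rank_map_le_iff: "s \<in> S \<Longrightarrow> s' \<in> S \<Longrightarrow> rank_map S s \<le> rank_map S s' \<longleftrightarrow> s \<le> s'"
  using card_ge_2 by (simp add: rank_map_def divide_le_cancel signed_rank_le_iff[symmetric])

lemma rank_map_eq_iff: "s \<in> S \<Longrightarrow> s' \<in> S \<Longrightarrow> rank_map S s = rank_map S s' \<longleftrightarrow> s = s'"
  by (metis order.antisym order.refl rank_map_le_iff)

lemma rank_map_max: "s \<in> S \<Longrightarrow> s' \<in> S \<Longrightarrow> rank_map S (max s s') = max (rank_map S s) (rank_map S s')"
  by (simp add: max_def rank_map_le_iff)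

lemma rank_map_min: "s \<in> S \<Longrightarrow> s' \<in> S \<Longrightarrow> rank_map S (min s s') = min (rank_map S s) (rank_map S s')"
  by (simp add: min_def rank_map_le_iff)

lemma rank_map_on_grid:
  assumes "s \<in> S" "0 < N" "2 * (card S - 1) dvd N"
  shows "\<exists>k\<le>N. rank_map S s = real k / real N"
proof -
  obtain c where N: "N = 2 * (card S - 1) * c" using assms(3) by (rule dvdE)
  with assms(2) have c: "0 < c" by simp
  have "0 \<le> s" "s \<le> 1" using assms(1) S_unit by auto
  then have lower: "- int (card S - 1) \<le> signed_rank S s" and upper: "signed_rank S s \<le> int (card S - 1)"
    using signed_rank_le_iff[OF zero_in_S assms(1)] signed_rank_le_iff[OF assms(1) one_in_S]
    by (simp_all add: signed_rank_zero signed_rank_one)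
  define k where "k = nat (signed_rank S s + int (card S - 1)) * c"
  have "k \<le> N" unfolding k_def N using upper by (intro mult_le_mono1) linarith
  moreover have "real k = (signed_rank S s + int (card S - 1)) * real c"
    unfolding k_def using lower by simp
  then have "real k / real N = (signed_rank S s + int (card S - 1)) * real c / (2 * real (card S - 1) * real c)"
    unfolding N by simp
  then have "rank_map S s = real k / real N"
    using c unfolding rank_map_def by simp
  ultimately show ?thesis by blast
qed

lemma tm_eval_rank_map:
  "(\<And>v. v \<in> set (occs t) \<Longrightarrow> x v \<in> S) \<Longrightarrow>
   tm_eval x t \<in> S \<and> rank_map S (tm_eval x t) = tm_eval (\<lambda>v. rank_map S (x v)) t"
proof (induction t)
  case (Join s t)
  then have s: "tm_eval x s \<in> S" "rank_map S (tm_eval x s) = tm_eval (\<lambda>v. rank_map S (x v)) s"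
    and t: "tm_eval x t \<in> S" "rank_map S (tm_eval x t) = tm_eval (\<lambda>v. rank_map S (x v)) t"
    by auto
  have "max (tm_eval x s) (tm_eval x t) \<in> S" using s t by (simp add: max_def)
  then show ?case using s t by (simp add: rank_map_max)
next
  case (Meet s t)
  then have s: "tm_eval x s \<in> S" "rank_map S (tm_eval x s) = tm_eval (\<lambda>v. rank_map S (x v)) s"
    and t: "tm_eval x t \<in> S" "rank_map S (tm_eval x t) = tm_eval (\<lambda>v. rank_map S (x v)) t"
    by auto
  have "min (tm_eval x s) (tm_eval x t) \<in> S" using s t by (simp add: min_def)
  then show ?case using s t by (simp add: rank_map_min)
qed (auto simp: zero_in_S one_in_S rank_map_zero rank_map_one rank_map_reflect reflect_in_S)

end

section \<open>Reduction to a finite grid\<close>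

definition anchors :: "(nat \<Rightarrow> real) \<Rightarrow> nat \<Rightarrow> real set" where
  "anchors x m = {0, 1} \<union> x ` {..<m} \<union> (\<lambda>i. 1 - x i) ` {..<m}"

lemma unit_symmetric_set_anchors:
  "(\<And>i. i < m \<Longrightarrow> 0 \<le> x i \<and> x i \<le> 1) \<Longrightarrow> unit_symmetric_set (anchors x m)"
  by unfold_locales (auto simp: anchors_def)

lemma card_anchors_le: "card (anchors x m) \<le> 2 * m + 2"
proof -
  have "card (anchors x m) \<le> card ({0, 1::real} \<union> x ` {..<m}) + card ((\<lambda>i. 1 - x i) ` {..<m})"
    unfolding anchors_def by (rule card_Un_le)
  also have "\<dots> \<le> (card {0, 1::real} + card (x ` {..<m})) + m"
    by (intro add_mono card_Un_le) (auto intro: card_image_le[THEN order.trans])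
  also have "\<dots> \<le> 2 + m + m"
    by (intro add_mono) (auto intro: card_image_le[THEN order.trans])
  finally show ?thesis by simp
qed

lemma same_morphismD:
  "same_morphism m ts1 ts2 \<Longrightarrow> \<forall>i<m. 0 \<le> x i \<and> x i \<le> 1 \<Longrightarrow> map (tm_eval x) ts1 = map (tm_eval x) ts2"
  by (simp add: same_morphism_def)

lemma same_morphism_scaled:
  assumes same: "same_morphism m ts1 ts2" and N: "0 < N" and y: "\<forall>i. y i \<le> N"
  shows "map (tm_eval_scaled N y) ts1 = map (tm_eval_scaled N y) ts2"
proof -
  have "\<forall>i<m. 0 \<le> real (y i) / real N \<and> real (y i) / real N \<le> 1" using y N by simp
  then have "map (tm_eval (\<lambda>i. real (y i) / real N)) ts1 = map (tm_eval (\<lambda>i. real (y i) / real N)) ts2"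
    by (rule same_morphismD[OF same])
  moreover have "tm_eval (\<lambda>i. real (y i) / real N) = (\<lambda>r. r / real N) \<circ> real \<circ> tm_eval_scaled N y"
    using tm_eval_divide[OF N] y by auto
  ultimately have "map ((\<lambda>r. r / real N) \<circ> real) (map (tm_eval_scaled N y) ts1) =
      map ((\<lambda>r. r / real N) \<circ> real) (map (tm_eval_scaled N y) ts2)"
    by simp
  moreover have "inj ((\<lambda>r. r / real N) \<circ> real)" using N by (auto simp: inj_def)
  ultimately show ?thesis by (simp only: inj_map_eq_map)
qed

text \<open>The anchors of a point of \<open>[0,1]\<^sup>m\<close> number at most \<open>2 * m + 2\<close>, so every
  denominator \<open>2 * (card S - 1)\<close> of their rank map divides \<open>grid_size m\<close>.\<close>
definition grid_size :: "nat \<Rightarrow> nat" where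
  "grid_size m = fact (4 * m + 2)"

lemma rank_equivalent_grid_point:
  assumes x01: "\<forall>i<m. 0 \<le> x i \<and> x i \<le> 1"
  obtains y where "\<forall>i. y i \<le> grid_size m"
    and "\<And>t. \<forall>v\<in>set (occs t). v < m \<Longrightarrow>
      tm_eval x t \<in> anchors x m \<and>
      rank_map (anchors x m) (tm_eval x t) = real (tm_eval_scaled (grid_size m) y t) / real (grid_size m)"
proof -
  let ?N = "grid_size m"
  interpret unit_symmetric_set "anchors x m"
    using x01 by (intro unit_symmetric_set_anchors) auto
  have N: "0 < ?N" by (simp add: grid_size_def)
  have dvd: "2 * (card (anchors x m) - 1) dvd ?N"
    unfolding grid_size_def using card_anchors_le[of x m] card_ge_2 by (intro dvd_fact) auto
  have x_in: "x i \<in> anchors x m" if "i < m" for i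
    using that by (simp add: anchors_def)
  have "\<forall>i. \<exists>k\<le>?N. i < m \<longrightarrow> rank_map (anchors x m) (x i) = real k / real ?N"
    using rank_map_on_grid[OF x_in N dvd] by (metis le0)
  then obtain y where y: "\<And>i. y i \<le> ?N" "\<And>i. i < m \<Longrightarrow> rank_map (anchors x m) (x i) = real (y i) / real ?N"
    by metis
  have rank: "tm_eval x t \<in> anchors x m \<and>
      rank_map (anchors x m) (tm_eval x t) = real (tm_eval_scaled ?N y t) / real ?N"
    if vars: "\<forall>v\<in>set (occs t). v < m" for t
  proof -
    have "\<And>v. v \<in> set (occs t) \<Longrightarrow> x v \<in> anchors x m" using vars x_in by blast
    note commutes = tm_eval_rank_map[OF this]
    have "tm_eval (\<lambda>v. rank_map (anchors x m) (x v)) t = tm_eval (\<lambda>v. real (y v) / real ?N) t"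
      using vars y(2) by (intro tm_eval_cong) auto
    then show ?thesis using commutes tm_eval_divide[OF N y(1)] by simp
  qed
  show ?thesis
    by (rule that[of y, OF _ rank]) (simp_all add: y(1))
qed

lemma same_morphism_iff_grid:
  assumes len: "length ts1 = length ts2"
    and vars: "\<forall>t\<in>set ts1 \<union> set ts2. \<forall>v\<in>set (occs t). v < m"
  shows "same_morphism m ts1 ts2 \<longleftrightarrow> (\<forall>y. (\<forall>i. y i \<le> grid_size m) \<longrightarrow>
    map (tm_eval_scaled (grid_size m) y) ts1 = map (tm_eval_scaled (grid_size m) y) ts2)"
proof (intro iffI allI impI)
  show "map (tm_eval_scaled (grid_size m) y) ts1 = map (tm_eval_scaled (grid_size m) y) ts2"
    if "same_morphism m ts1 ts2" "\<forall>i. y i \<le> grid_size m" for y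
    using same_morphism_scaled that by (simp add: grid_size_def)
next
  assume grid: "\<forall>y. (\<forall>i. y i \<le> grid_size m) \<longrightarrow>
    map (tm_eval_scaled (grid_size m) y) ts1 = map (tm_eval_scaled (grid_size m) y) ts2"
  have "map (tm_eval x) ts1 = map (tm_eval x) ts2" if x01: "\<forall>i<m. 0 \<le> x i \<and> x i \<le> 1" for x
  proof -
    obtain y where y: "\<forall>i. y i \<le> grid_size m"
      and rank: "\<And>t. \<forall>v\<in>set (occs t). v < m \<Longrightarrow> tm_eval x t \<in> anchors x m \<and>
        rank_map (anchors x m) (tm_eval x t) = real (tm_eval_scaled (grid_size m) y t) / real (grid_size m)"
      using rank_equivalent_grid_point[OF x01] by blast
    interpret unit_symmetric_set "anchors x m"
      using x01 by (intro unit_symmetric_set_anchors) auto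
    show ?thesis
    proof (rule nth_equalityI)
      fix j assume "j < length (map (tm_eval x) ts1)"
      then have j: "j < length ts1" "j < length ts2" using len by simp_all
      have "tm_eval_scaled (grid_size m) y (ts1 ! j) = tm_eval_scaled (grid_size m) y (ts2 ! j)"
        using grid y j by (metis nth_map)
      moreover have "\<forall>v\<in>set (occs (ts1 ! j)). v < m" "\<forall>v\<in>set (occs (ts2 ! j)). v < m"
        using vars j by auto
      note rank1 = rank[OF this(1)] and rank2 = rank[OF this(2)]
      ultimately have "rank_map (anchors x m) (tm_eval x (ts1 ! j)) = rank_map (anchors x m) (tm_eval x (ts2 ! j))"
        by simp
      then have "tm_eval x (ts1 ! j) = tm_eval x (ts2 ! j)"
        using rank1 rank2 rank_map_eq_iff by blast
      with j show "map (tm_eval x) ts1 ! j = map (tm_eval x) ts2 ! j"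
        by simp
    qed (simp add: len)
  qed
  then show "same_morphism m ts1 ts2"
    using len by (simp add: same_morphism_def)
qed

lemma all_grid_points_iff:
  assumes local: "\<And>y z. (\<And>i. i < m \<Longrightarrow> y i = z i) \<Longrightarrow> P y \<longleftrightarrow> P z"
  shows "(\<forall>g<Suc (list_encode (replicate m N)). P (grid_point N g)) \<longleftrightarrow> (\<forall>y. (\<forall>i. y i \<le> N) \<longrightarrow> P y)"
proof (intro iffI allI impI)
  fix y :: "nat \<Rightarrow> nat" assume all_g: "\<forall>g<Suc (list_encode (replicate m N)). P (grid_point N g)"
    and y: "\<forall>i. y i \<le> N"
  let ?g = "list_encode (map y [0..<m])"
  have "?g \<le> list_encode (replicate m N)"
    using y by (intro list_encode_mono) (simp add: list_all2_conv_all_nth)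
  then have "P (grid_point N ?g)" using all_g by simp
  moreover have "grid_point N ?g i = y i" if "i < m" for i
    using that y by (simp add: grid_point_def nth_code_list_encode min_absorb2)
  ultimately show "P y" using local by blast
qed (simp add: grid_point_def)

definition same_on_grid :: "nat \<Rightarrow> bool" where
  "same_on_grid c \<longleftrightarrow>
    (let m = fst (prod_decode c); N = grid_size m;
         L1 = fst (prod_decode (snd (prod_decode c))); L2 = snd (prod_decode (snd (prod_decode c)))
     in \<forall>g < Suc (list_encode (replicate m N)). \<forall>j < L1.
          eval_code N g (nth_code L1 j) = eval_code N g (nth_code L2 j))"

lemma decidable_same_on_grid: "decidable 1 (\<lambda>xs. same_on_grid (xs ! 0))"
  unfolding same_on_grid_def Let_def grid_size_def
  by (intro decidable_all_less decidable_eq computable_eval_code computable_nth_code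
      computable_list_encode_replicate computable_fact computable_add computable_mult
      computable_fst_prod_decode computable_snd_prod_decode computable_Suc computable_proj_tl computable_proj_tl_tl
      computable_proj computable_const) auto

lemma eval_codes_agree_iff:
  assumes len: "length ts1 = length ts2"
  shows "(\<forall>j<list_encode (map tm_code ts1).
      eval_code N g (nth_code (list_encode (map tm_code ts1)) j) =
      eval_code N g (nth_code (list_encode (map tm_code ts2)) j)) \<longleftrightarrow>
    map (tm_eval_scaled N (grid_point N g)) ts1 = map (tm_eval_scaled N (grid_point N g)) ts2"
proof -
  have "length ts1 \<le> list_encode (map tm_code ts1)"
    using length_le_list_encode[of "map tm_code ts1"] by simp
  then have "(\<forall>j<list_encode (map tm_code ts1).
      eval_code N g (nth_code (list_encode (map tm_code ts1)) j) =
      eval_code N g (nth_code (list_encode (map tm_code ts2)) j)) \<longleftrightarrow>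
    (\<forall>j<length ts1. tm_eval_scaled N (grid_point N g) (ts1 ! j) = tm_eval_scaled N (grid_point N g) (ts2 ! j))"
    using len by (auto simp: nth_code_list_encode eval_code_tm_code)
  also have "\<dots> \<longleftrightarrow> map (tm_eval_scaled N (grid_point N g)) ts1 = map (tm_eval_scaled N (grid_point N g)) ts2"
    using len by (simp add: list_eq_iff_nth_eq)
  finally show ?thesis .
qed

lemma same_on_grid_input_code:
  assumes len: "length ts1 = length ts2"
    and vars: "\<forall>t\<in>set ts1 \<union> set ts2. \<forall>v\<in>set (occs t). v < m"
  shows "same_on_grid (input_code m ts1 ts2) \<longleftrightarrow> same_morphism m ts1 ts2"
proof -
  let ?N = "grid_size m"
  have local: "map (tm_eval_scaled ?N y) ts1 = map (tm_eval_scaled ?N y) ts2 \<longleftrightarrow>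
      map (tm_eval_scaled ?N z) ts1 = map (tm_eval_scaled ?N z) ts2" if "\<And>i. i < m \<Longrightarrow> y i = z i" for y z
  proof -
    have "map (tm_eval_scaled ?N y) ts = map (tm_eval_scaled ?N z) ts" if "set ts \<subseteq> set ts1 \<union> set ts2" for ts
      using that vars \<open>\<And>i. i < m \<Longrightarrow> y i = z i\<close> by (auto intro!: tm_eval_scaled_cong)
    then show ?thesis by (metis Un_upper1 Un_upper2)
  qed
  have "same_on_grid (input_code m ts1 ts2) \<longleftrightarrow> (\<forall>g<Suc (list_encode (replicate m ?N)).
      map (tm_eval_scaled ?N (grid_point ?N g)) ts1 = map (tm_eval_scaled ?N (grid_point ?N g)) ts2)"
    unfolding same_on_grid_def input_code_def Let_def using eval_codes_agree_iff[OF len] by simp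
  also have "\<dots> \<longleftrightarrow> (\<forall>y. (\<forall>i. y i \<le> ?N) \<longrightarrow> map (tm_eval_scaled ?N y) ts1 = map (tm_eval_scaled ?N y) ts2)"
    by (rule all_grid_points_iff) (rule local)
  also have "\<dots> \<longleftrightarrow> same_morphism m ts1 ts2"
    using same_morphism_iff_grid[OF len vars] by simp
  finally show ?thesis .
qed

theorem corollary1:
  assumes "admissible_rules a" and "admissible_sig b"
  shows "\<exists>f. (\<forall>x. \<exists>y. recf_eval f [x] y) \<and>
    (\<forall>m ts1 ts2. length ts1 = length ts2 \<longrightarrow> wf_tuple a b m ts1 \<longrightarrow> wf_tuple a b m ts2 \<longrightarrow>
       recf_eval f [input_code m ts1 ts2] (if same_morphism m ts1 ts2 then 1 else 0))"
proof -
  obtain F where F: "\<And>xs. length xs = 1 \<Longrightarrow> recf_eval F xs (if same_on_grid (xs ! 0) then 1 else 0)"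
    using decidable_same_on_grid unfolding decidable_def computable_def by blast
  have F1: "recf_eval F [c] (if same_on_grid c then 1 else 0)" for c
    using F[of "[c]"] by simp
  show ?thesis
  proof (intro exI[of _ F] conjI allI impI)
    show "\<exists>y. recf_eval F [x] y" for x
      using F1 by blast
    fix m ts1 ts2
    assume len: "length ts1 = length ts2" and "wf_tuple a b m ts1" "wf_tuple a b m ts2"
    then have vars: "\<forall>t\<in>set ts1 \<union> set ts2. \<forall>v\<in>set (occs t). v < m"
      unfolding wf_tuple_def Let_def by auto
    show "recf_eval F [input_code m ts1 ts2] (if same_morphism m ts1 ts2 then 1 else 0)"
      using F1[of "input_code m ts1 ts2"] same_on_grid_input_code[OF len vars] by simp
  qed
qed

end
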